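(* Let $G=(V,E)$ be a finite $k$-regular graph with $\widetilde\lambda_2=\widetilde\lambda_2(G)<\frac12$, and suppose $|V|$ is sufficiently large, i.e. $|V|\ge N$ for a threshold $N$ depending only on $\widetilde\lambda_2$. Then for every subset $\emptyset\ne S\subsetneq V$, $|E(S,\bar S)|\ge k$.
   Context: $\widetilde\lambda_2(G)$ is the second largest eigenvalue of the adjacency matrix of $G$ divided by $k$. $E(S,\bar S)$ is the set of edges with one endpoint in $S$ and the other in $V\setminus S$. *)

theory Defs
  imports "Jordan_Normal_Form.Char_Poly" "HOL-Library.Multiset"
begin

definition simple_graph :: "nat \<Rightarrow> (nat \<Rightarrow> nat \<Rightarrow> bool) \<Rightarrow> bool" where
  "simple_graph n E \<longleftrightarrow> (\<forall>u v. E u v \<longrightarrow> u < n \<and> v < n \<and> u \<noteq> v \<and> E v u)"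

definition regular_graph :: "nat \<Rightarrow> (nat \<Rightarrow> nat \<Rightarrow> bool) \<Rightarrow> nat \<Rightarrow> bool" where
  "regular_graph n E k \<longleftrightarrow> simple_graph n E \<and> (\<forall>v<n. card {u. u < n \<and> E v u} = k)"

definition adj_matrix :: "nat \<Rightarrow> (nat \<Rightarrow> nat \<Rightarrow> bool) \<Rightarrow> real mat" where
  "adj_matrix n E = mat n n (\<lambda>(i, j). if E i j then 1 else 0)"

text \<open>Eigenvalues with multiplicity, listed in non-increasing order
  (roots of the characteristic polynomial; real since the matrix is symmetric).\<close>
definition eigenvalues_desc :: "real mat \<Rightarrow> real list" where
  "eigenvalues_desc A = rev (sorted_list_of_multiset (proots (char_poly A)))"

definition lambda2 :: "nat \<Rightarrow> (nat \<Rightarrow> nat \<Rightarrow> bool) \<Rightarrow> real" where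
  "lambda2 n E = eigenvalues_desc (adj_matrix n E) ! 1"

definition lambda2_norm :: "nat \<Rightarrow> (nat \<Rightarrow> nat \<Rightarrow> bool) \<Rightarrow> nat \<Rightarrow> real" where
  "lambda2_norm n E k = lambda2 n E / real k"

definition cut_edges :: "nat \<Rightarrow> (nat \<Rightarrow> nat \<Rightarrow> bool) \<Rightarrow> nat set \<Rightarrow> (nat \<times> nat) set" where
  "cut_edges n E S = {(u, v). u \<in> S \<and> v \<in> {0..<n} - S \<and> E u v}"

end

theory Submission
  imports Defs "Jordan_Normal_Form.Schur_Decomposition"
begin

text \<open>Let \<open>s = |S| \<le> n/2\<close> (otherwise pass to the complement). Every vertex of \<open>S\<close> has at
  most \<open>s - 1\<close> neighbours inside \<open>S\<close>, so \<open>|E(S,S\<^sup>c)| \<ge> s (k - s + 1)\<close>, which is at least \<open>k\<close>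
  when \<open>s \<le> k\<close>. When \<open>s > k\<close>, the spectral bound \<open>n |E(S,S\<^sup>c)| \<ge> (k - \<lambda>\<^sub>2) s (n - s)\<close>,
  obtained from the Rayleigh quotient of the centred indicator vector of \<open>S\<close>, together with
  \<open>\<lambda>\<^sub>2 < k/2\<close> gives \<open>|E(S,S\<^sup>c)| > k s / 4 \<ge> k (k + 1) / 4 > k - 1\<close>.\<close>

section \<open>The spectral theorem for real symmetric matrices\<close>

lemma real_symmetric_eigenvalue_real:
  fixes A :: "real mat"
  assumes A: "A \<in> carrier_mat n n" and sym: "transpose_mat A = A"
    and ev: "eigenvalue (map_mat complex_of_real A) a"
  shows "a \<in> \<real>"
proof -
  define Ac where "Ac = map_mat complex_of_real A"
  have Ac: "Ac \<in> carrier_mat n n" using A unfolding Ac_def by auto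
  from ev obtain v where "eigenvector Ac v a" unfolding eigenvalue_def Ac_def by blast
  hence v: "v \<in> carrier_vec n" and v0: "v \<noteq> 0\<^sub>v n" and Av: "Ac *\<^sub>v v = a \<cdot>\<^sub>v v"
    unfolding eigenvector_def using Ac by auto
  have symA: "\<And>i j. i < n \<Longrightarrow> j < n \<Longrightarrow> A $$ (j, i) = A $$ (i, j)"
    by (metis A carrier_matD(1,2) index_transpose_mat(1) sym)
  have row: "(\<Sum>j<n. of_real (A $$ (i, j)) * v $ j) = a * v $ i" if i: "i < n" for i
  proof -
    have "(Ac *\<^sub>v v) $ i = (\<Sum>j<n. of_real (A $$ (i, j)) * v $ j)"
      using A v i by (simp add: Ac_def scalar_prod_def lessThan_atLeast0)
    thus ?thesis using Av v i by simp
  qed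
  define q where "q = (\<Sum>i<n. \<Sum>j<n. cnj (v $ i) * of_real (A $$ (i, j)) * v $ j)"
  define X where "X = (\<Sum>i<n. (cmod (v $ i))\<^sup>2)"
  have "q = (\<Sum>i<n. cnj (v $ i) * (a * v $ i))"
    unfolding q_def by (intro sum.cong refl) (simp add: row sum_distrib_left[symmetric] mult.assoc)
  also have "\<dots> = a * of_real X"
    unfolding X_def of_real_sum complex_norm_square
    by (simp add: sum_distrib_left mult_ac)
  finally have q: "q = a * of_real X" .
  \<comment> \<open>the quadratic form \<open>v\<^sup>* A v\<close> of a symmetric real matrix is self-conjugate\<close>
  have "cnj q = (\<Sum>i<n. \<Sum>j<n. v $ i * of_real (A $$ (i, j)) * cnj (v $ j))"
    unfolding q_def by (simp add: cnj_sum)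
  also have "\<dots> = (\<Sum>j<n. \<Sum>i<n. v $ i * of_real (A $$ (i, j)) * cnj (v $ j))"
    by (rule sum.swap)
  also have "\<dots> = q"
    unfolding q_def by (intro sum.cong refl) (simp add: symA mult_ac)
  finally have "q \<in> \<real>" by (simp add: Reals_cnj_iff)
  from v v0 obtain i where i: "i < n" and vi: "v $ i \<noteq> 0"
    by (metis carrier_vecD eq_vecI index_zero_vec(1,2))
  have "X > 0" unfolding X_def by (rule sum_pos2[of _ i]) (use i vi in auto)
  hence "a = q / of_real X" using q by simp
  thus ?thesis using \<open>q \<in> \<real>\<close> by simp
qed

lemma scalar_prod_self_pos:
  fixes v :: "real vec"
  assumes "v \<in> carrier_vec n" and "v \<noteq> 0\<^sub>v n"
  shows "v \<bullet> v > 0"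
  using conjugate_square_greater_0_vec[OF assms(1)] assms(2) by simp

lemma scalar_prod_normalize:
  fixes v w :: "real vec"
  assumes "v \<in> carrier_vec n" and "w \<in> carrier_vec n"
  shows "((1 / sqrt (v \<bullet> v)) \<cdot>\<^sub>v v) \<bullet> ((1 / sqrt (w \<bullet> w)) \<cdot>\<^sub>v w)
    = (v \<bullet> w) / (sqrt (v \<bullet> v) * sqrt (w \<bullet> w))"
  using assms by simp

lemma real_symmetric_unit_eigenvector:
  fixes A :: "real mat"
  assumes A: "A \<in> carrier_mat n n" and n: "n > 0" and sym: "transpose_mat A = A"
  shows "\<exists>e v. v \<in> carrier_vec n \<and> v \<bullet> v = 1 \<and> A *\<^sub>v v = e \<cdot>\<^sub>v v"
proof -
  define Ac where "Ac = map_mat complex_of_real A"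
  have Ac: "Ac \<in> carrier_mat n n" using A unfolding Ac_def by auto
  from char_poly_factorized[OF Ac] obtain as where
    cp: "char_poly Ac = (\<Prod>a\<leftarrow>as. [:- a, 1:])" and len: "length as = n" by blast
  from len n obtain a as' where as: "as = a # as'" by (cases as) auto
  have root: "poly (char_poly Ac) a = 0" unfolding cp as by simp
  hence "a \<in> \<real>"
    using real_symmetric_eigenvalue_real[OF A sym] eigenvalue_root_char_poly[OF Ac]
    unfolding Ac_def by blast
  then obtain e where ae: "a = of_real e" by (metis Reals_cases)
  have "poly (char_poly Ac) a = of_real (poly (char_poly A) e)"
    unfolding Ac_def of_real_hom.char_poly_hom[OF A] ae by (simp add: of_real_hom.poly_map_poly)
  hence "eigenvalue A e" using root eigenvalue_root_char_poly[OF A] by simp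
  then obtain v where "eigenvector A v e" unfolding eigenvalue_def by blast
  hence v: "v \<in> carrier_vec n" and v0: "v \<noteq> 0\<^sub>v n" and Av: "A *\<^sub>v v = e \<cdot>\<^sub>v v"
    unfolding eigenvector_def using A by auto
  define u where "u = (1 / sqrt (v \<bullet> v)) \<cdot>\<^sub>v v"
  have "u \<bullet> u = 1"
    unfolding u_def scalar_prod_normalize[OF v v] using scalar_prod_self_pos[OF v v0] by simp
  moreover have "A *\<^sub>v u = e \<cdot>\<^sub>v u" unfolding u_def using A v Av
    by (simp add: mult_mat_vec smult_smult_assoc mult.commute)
  moreover have "u \<in> carrier_vec n" unfolding u_def using v by simp
  ultimately show ?thesis by blast
qed

lemma mat_of_cols_orthonormal:
  fixes ws :: "'a :: comm_ring_1 vec list"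
  assumes "set ws \<subseteq> carrier_vec n" and "length ws = n"
    and "\<And>i j. i < n \<Longrightarrow> j < n \<Longrightarrow> ws ! i \<bullet> ws ! j = (if i = j then 1 else 0)"
  shows "transpose_mat (mat_of_cols n ws) * mat_of_cols n ws = 1\<^sub>m n"
proof -
  have "col (mat_of_cols n ws) j = ws ! j" if "j < n" for j
    using assms(1,2) that by (simp add: col_mat_of_cols nth_mem subsetD)
  thus ?thesis by (intro eq_matI) (use assms(2,3) in auto)
qed

lemma unit_vector_orthogonal_extension:
  fixes v :: "real vec"
  assumes v: "v \<in> carrier_vec n" and vv: "v \<bullet> v = 1"
  shows "\<exists>W. W \<in> carrier_mat n n \<and> transpose_mat W * W = 1\<^sub>m n \<and> col W 0 = v"
proof -
  have v0: "v \<noteq> 0\<^sub>v n" using vv by auto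
  interpret cof_vec_space n "TYPE(real)" .
  define b where "b = basis_completion v"
  from basis_completion[OF v v0, folded b_def]
  have b: "set b \<subseteq> carrier_vec n" and dist: "distinct b" and indep: "\<not> lin_dep (set b)"
    and lenb: "length b = n" and hdb: "hd b = v" by auto
  have "b \<noteq> []" unfolding b_def basis_completion_def Let_def by simp
  with hdb obtain vs where bv: "b = v # vs" by (cases b) auto
  define ws where "ws = gram_schmidt n b"
  from gram_schmidt_result[OF b dist indep ws_def]
  have orth: "corthogonal ws" and wsc: "set ws \<subseteq> carrier_vec n" and lenw: "length ws = n"
    using lenb by auto
  have npos: "n > 0" using lenb bv by auto
  have ws0: "ws ! 0 = v"
    using gram_schmidt_hd[OF v, of vs] lenw npos unfolding ws_def bv
    by (cases "gram_schmidt n (v # vs)") auto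
  have wsi: "ws ! i \<in> carrier_vec n" if "i < n" for i using wsc lenw that by auto
  have worth: "ws ! i \<bullet> ws ! j = 0 \<longleftrightarrow> i \<noteq> j" if "i < n" "j < n" for i j
    using corthogonalD[OF orth, of i j] lenw that by simp
  define ws' where "ws' = map (\<lambda>w. (1 / sqrt (w \<bullet> w)) \<cdot>\<^sub>v w) ws"
  have ws'i: "ws' ! i = (1 / sqrt (ws ! i \<bullet> ws ! i)) \<cdot>\<^sub>v (ws ! i)" if "i < n" for i
    unfolding ws'_def using lenw that by simp
  have ws'c: "ws' ! i \<in> carrier_vec n" if "i < n" for i using ws'i wsi that by simp
  have ws'o: "ws' ! i \<bullet> ws' ! j = (if i = j then 1 else 0)" if i: "i < n" and j: "j < n" for i j
  proof -
    have "ws ! i \<bullet> ws ! i > 0" using scalar_prod_self_pos wsi[OF i] worth[OF i i] by fastforce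
    thus ?thesis
      unfolding ws'i[OF i] ws'i[OF j] scalar_prod_normalize[OF wsi[OF i] wsi[OF j]]
      using worth[OF i j] by auto
  qed
  have ws': "set ws' \<subseteq> carrier_vec n" "length ws' = n"
    using ws'c lenw unfolding ws'_def by (auto simp: in_set_conv_nth)
  show ?thesis
  proof (intro exI conjI)
    show "mat_of_cols n ws' \<in> carrier_mat n n" using ws'(2) mat_of_cols_carrier(1)[of n ws'] by simp
    show "transpose_mat (mat_of_cols n ws') * mat_of_cols n ws' = 1\<^sub>m n"
      by (rule mat_of_cols_orthonormal[OF ws' ws'o])
    show "col (mat_of_cols n ws') 0 = v"
      using ws'(2) npos ws'c[OF npos] ws'i[OF npos] ws0 vv by simp
  qed
qed

lemma orthogonal_deflation:
  fixes A W :: "real mat"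
  assumes A: "A \<in> carrier_mat (Suc m) (Suc m)" and symA: "transpose_mat A = A"
    and W: "W \<in> carrier_mat (Suc m) (Suc m)" and WW: "transpose_mat W * W = 1\<^sub>m (Suc m)"
    and ev: "A *\<^sub>v col W 0 = e \<cdot>\<^sub>v col W 0"
  obtains C where "C \<in> carrier_mat m m" and "transpose_mat C = C"
    and "transpose_mat W * A * W = four_block_mat (mat 1 1 (\<lambda>_. e)) (0\<^sub>m 1 m) (0\<^sub>m m 1) C"
proof -
  let ?n = "Suc m"
  define B where "B = transpose_mat W * A * W"
  have WT: "transpose_mat W \<in> carrier_mat ?n ?n" using W by simp
  have B: "B \<in> carrier_mat ?n ?n" unfolding B_def using W A by auto
  have B_assoc: "B = transpose_mat W * (A * W)" unfolding B_def by (rule assoc_mult_mat[OF WT A W])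
  have Bij: "B $$ (i, j) = col W i \<bullet> (A *\<^sub>v col W j)" if i: "i < ?n" and j: "j < ?n" for i j
    unfolding B_assoc using i j W A by (subst index_mult_mat(1)) (auto simp: col_mult2[OF A W j])
  have WWij: "col W i \<bullet> col W j = (if i = j then 1 else 0)" if "i < ?n" "j < ?n" for i j
  proof -
    have "(transpose_mat W * W) $$ (i, j) = col W i \<bullet> col W j" using that W by simp
    thus ?thesis using WW that by simp
  qed
  have Bi0: "B $$ (i, 0) = (if i = 0 then e else 0)" if i: "i < ?n" for i
    using Bij[OF i] ev W i WWij[OF i, of 0] by simp
  have "transpose_mat B = transpose_mat (A * W) * W"
    unfolding B_assoc using transpose_mult[OF WT, of "A * W" ?n] W A by simp
  also have "\<dots> = B" unfolding B_def using transpose_mult[OF A W] symA by simp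
  finally have Bsym: "B $$ (j, i) = B $$ (i, j)" if "i < ?n" "j < ?n" for i j
    by (metis B carrier_matD(1,2) index_transpose_mat(1) that)
  define C where "C = mat m m (\<lambda>(i, j). B $$ (Suc i, Suc j))"
  have "C \<in> carrier_mat m m" unfolding C_def by simp
  moreover have "transpose_mat C = C" unfolding C_def by (rule eq_matI) (auto simp: Bsym)
  moreover have "B = four_block_mat (mat 1 1 (\<lambda>_. e)) (0\<^sub>m 1 m) (0\<^sub>m m 1) C"
  proof (rule eq_matI)
    fix i j assume "i < dim_row (four_block_mat (mat 1 1 (\<lambda>_. e)) (0\<^sub>m 1 m) (0\<^sub>m m 1) C)"
      and "j < dim_col (four_block_mat (mat 1 1 (\<lambda>_. e)) (0\<^sub>m 1 m) (0\<^sub>m m 1) C)"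
    hence i: "i < ?n" and j: "j < ?n" unfolding C_def by auto
    show "B $$ (i, j) = four_block_mat (mat 1 1 (\<lambda>_. e)) (0\<^sub>m 1 m) (0\<^sub>m m 1) C $$ (i, j)"
      using Bi0[OF i] Bi0[OF j] Bsym[OF i j] i j unfolding C_def by (cases i; cases j) auto
  qed (use B in \<open>auto simp: C_def\<close>)
  ultimately show ?thesis using that unfolding B_def by blast
qed

lemma four_block_orthogonal_diagonalization:
  fixes U D C E :: "'a :: comm_ring_1 mat"
  assumes U: "U \<in> carrier_mat m m" and D: "D \<in> carrier_mat m m" and E: "E \<in> carrier_mat 1 1"
    and UU: "transpose_mat U * U = 1\<^sub>m m" and C: "C = U * D * transpose_mat U"
    and dD: "diagonal_mat D"
  defines "U' \<equiv> four_block_mat (1\<^sub>m 1) (0\<^sub>m 1 m) (0\<^sub>m m 1) U"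
    and "D' \<equiv> four_block_mat E (0\<^sub>m 1 m) (0\<^sub>m m 1) D"
  shows "transpose_mat U' * U' = 1\<^sub>m (Suc m)"
    and "four_block_mat E (0\<^sub>m 1 m) (0\<^sub>m m 1) C = U' * D' * transpose_mat U'"
    and "diagonal_mat D'"
proof -
  have U'T: "transpose_mat U' = four_block_mat (1\<^sub>m 1) (0\<^sub>m 1 m) (0\<^sub>m m 1) (transpose_mat U)"
    unfolding U'_def by (subst transpose_four_block_mat) (use U in auto)
  have "transpose_mat U' * U' = four_block_mat (1\<^sub>m 1) (0\<^sub>m 1 m) (0\<^sub>m m 1) (transpose_mat U * U)"
    unfolding U'T by (unfold U'_def, subst mult_four_block_mat[of _ 1 1 _ m _ m _ _ 1 _ m]) (use U in auto)
  thus "transpose_mat U' * U' = 1\<^sub>m (Suc m)" using UU by simp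
  have UD: "U' * D' = four_block_mat E (0\<^sub>m 1 m) (0\<^sub>m m 1) (U * D)"
    unfolding U'_def D'_def
    by (subst mult_four_block_mat[of _ 1 1 _ m _ m _ _ 1 _ m]) (use U D E in auto)
  have "U' * D' * transpose_mat U' = four_block_mat E (0\<^sub>m 1 m) (0\<^sub>m m 1) (U * D * transpose_mat U)"
    unfolding U'T by (unfold UD, subst mult_four_block_mat[of _ 1 1 _ m _ m _ _ 1 _ m]) (use U D E in auto)
  thus "four_block_mat E (0\<^sub>m 1 m) (0\<^sub>m m 1) C = U' * D' * transpose_mat U'" using C by simp
  show "diagonal_mat D'"
    unfolding diagonal_mat_def D'_def
  proof (intro allI impI)
    fix i j assume "i < dim_row (four_block_mat E (0\<^sub>m 1 m) (0\<^sub>m m 1) D)"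
      and "j < dim_col (four_block_mat E (0\<^sub>m 1 m) (0\<^sub>m m 1) D)" and "i \<noteq> j"
    thus "four_block_mat E (0\<^sub>m 1 m) (0\<^sub>m m 1) D $$ (i, j) = 0"
      using dD D E unfolding diagonal_mat_def by (cases i; cases j) auto
  qed
qed

lemma real_symmetric_orthogonal_diagonalization:
  fixes A :: "real mat"
  assumes "A \<in> carrier_mat n n" and "transpose_mat A = A"
  shows "\<exists>U D. U \<in> carrier_mat n n \<and> D \<in> carrier_mat n n \<and> transpose_mat U * U = 1\<^sub>m n
     \<and> diagonal_mat D \<and> A = U * D * transpose_mat U"
  using assms
proof (induction n arbitrary: A)
  case 0
  hence "A = 1\<^sub>m 0 * A * transpose_mat (1\<^sub>m 0)" and "diagonal_mat A"
    by (auto intro!: eq_matI simp: diagonal_mat_def)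
  thus ?case using 0 by (intro exI[of _ "1\<^sub>m 0"] exI[of _ A]) auto
next
  case (Suc m A)
  let ?n = "Suc m"
  have A: "A \<in> carrier_mat ?n ?n" and symA: "transpose_mat A = A" using Suc.prems by auto
  obtain e v where v: "v \<in> carrier_vec ?n" and vv: "v \<bullet> v = 1" and ev: "A *\<^sub>v v = e \<cdot>\<^sub>v v"
    using real_symmetric_unit_eigenvector[OF A _ symA] by blast
  obtain W where W: "W \<in> carrier_mat ?n ?n" and WW: "transpose_mat W * W = 1\<^sub>m ?n"
    and W0: "col W 0 = v" using unit_vector_orthogonal_extension[OF v vv] by blast
  define E where "E = mat 1 1 (\<lambda>_. e)"
  obtain C where C: "C \<in> carrier_mat m m" and symC: "transpose_mat C = C"
    and WAW: "transpose_mat W * A * W = four_block_mat E (0\<^sub>m 1 m) (0\<^sub>m m 1) C"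
    using orthogonal_deflation[OF A symA W WW] ev W0 unfolding E_def by metis
  obtain U D where U: "U \<in> carrier_mat m m" and D: "D \<in> carrier_mat m m"
    and UU: "transpose_mat U * U = 1\<^sub>m m" and dD: "diagonal_mat D"
    and CUD: "C = U * D * transpose_mat U"
    using Suc.IH[OF C symC] by blast
  define U' where "U' = four_block_mat (1\<^sub>m 1) (0\<^sub>m 1 m) (0\<^sub>m m 1) U"
  define D' where "D' = four_block_mat E (0\<^sub>m 1 m) (0\<^sub>m m 1) D"
  have E: "E \<in> carrier_mat 1 1" unfolding E_def by simp
  note block = four_block_orthogonal_diagonalization[OF U D E UU CUD dD, folded U'_def D'_def]
  have U': "U' \<in> carrier_mat ?n ?n" and D': "D' \<in> carrier_mat ?n ?n"
    unfolding U'_def D'_def using U D E by auto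
  have WT: "transpose_mat W \<in> carrier_mat ?n ?n" using W by simp
  have WW': "W * transpose_mat W = 1\<^sub>m ?n" using mat_mult_left_right_inverse[OF WT W WW] .
  have "W * (transpose_mat W * A * W) * transpose_mat W
      = (W * transpose_mat W) * A * (W * transpose_mat W)"
    using W A by (simp add: assoc_mult_mat[of _ ?n ?n _ ?n _ ?n])
  hence "A = W * (transpose_mat W * A * W) * transpose_mat W" using WW' A by simp
  also have "\<dots> = (W * U') * D' * transpose_mat (W * U')"
    unfolding WAW block(2) transpose_mult[OF W U']
    using W U' D' by (simp add: assoc_mult_mat[of _ ?n ?n _ ?n _ ?n])
  finally have "A = (W * U') * D' * transpose_mat (W * U')" .
  moreover have "transpose_mat (W * U') * (W * U') = transpose_mat U' * (transpose_mat W * W) * U'"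
    unfolding transpose_mult[OF W U'] using W U' by (simp add: assoc_mult_mat[of _ ?n ?n _ ?n _ ?n])
  hence "transpose_mat (W * U') * (W * U') = 1\<^sub>m ?n" using WW block(1) U' by simp
  ultimately show ?case using W U' D' block(3) by (intro exI[of _ "W * U'"] exI[of _ D']) auto
qed

section \<open>The second eigenvalue bounds the quadratic form on a hyperplane\<close>

lemma proots_prod_linear_factors:
  "proots (\<Prod>a\<leftarrow>ds. [:- a, 1:]) = mset (ds :: 'a :: idom list)"
proof (induction ds)
  case (Cons a ds)
  have "(\<Prod>a\<leftarrow>ds. [:- a, 1:]) \<noteq> (0 :: 'a poly)" by (auto simp: prod_list_zero_iff)
  hence "proots ([:- a, 1:] * (\<Prod>x\<leftarrow>ds. [:- x, 1:]))
      = proots [:- a, 1:] + proots (\<Prod>x\<leftarrow>ds. [:- x, 1:])"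
    by (intro proots_mult) auto
  also have "proots [:- a, 1:] = {#a#}" using proots_linear_factor[of "- a"] by simp
  finally show ?case using Cons by simp
qed simp

lemma eigenvalues_desc_diagonalization:
  fixes A U D :: "real mat"
  assumes A: "A \<in> carrier_mat n n" and U: "U \<in> carrier_mat n n" and D: "D \<in> carrier_mat n n"
    and UU: "transpose_mat U * U = 1\<^sub>m n" and dD: "diagonal_mat D"
    and AUD: "A = U * D * transpose_mat U"
  shows "eigenvalues_desc A = rev (sort (diag_mat D))"
proof -
  have UT: "transpose_mat U \<in> carrier_mat n n" using U by simp
  have "U * transpose_mat U = 1\<^sub>m n" using mat_mult_left_right_inverse[OF UT U UU] .
  hence "similar_mat A D" unfolding similar_mat_def similar_mat_wit_def Let_def
    using A D U UT UU AUD by (intro exI[of _ U] exI[of _ "transpose_mat U"]) auto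
  hence "char_poly A = char_poly D" by (rule char_poly_similar)
  also have "\<dots> = (\<Prod>a\<leftarrow>diag_mat D. [:- a, 1:])"
    by (rule char_poly_upper_triangular[OF D])
      (use dD D in \<open>auto simp: diagonal_mat_def upper_triangular_def\<close>)
  finally have "proots (char_poly A) = mset (diag_mat D)" by (simp add: proots_prod_linear_factors)
  thus ?thesis unfolding eigenvalues_desc_def by simp
qed

lemma nth_le_second_largest:
  fixes ds :: "'a :: linorder list"
  assumes i0: "i0 < length ds" and j: "j < length ds" and ji: "j \<noteq> i0"
    and max: "ds ! j \<le> ds ! i0"
  shows "ds ! j \<le> rev (sort ds) ! 1"
proof (rule ccontr)
  assume "\<not> ?thesis"
  hence lt: "rev (sort ds) ! 1 < ds ! j" by simp
  define c where "c = ds ! j"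
  define L where "L = sort ds"
  have lenL: "length L = length ds" unfolding L_def by simp
  have n2: "length ds \<ge> 2" using i0 j ji by auto
  have r1: "rev L ! 1 = L ! (length ds - 2)" using n2 lenL by (simp add: rev_nth numeral_2_eq_2)
  \<comment> \<open>at most one entry of the sorted list is \<open>\<ge> c\<close>, but two entries of \<open>ds\<close> are\<close>
  have "{i. i < length L \<and> c \<le> L ! i} \<subseteq> {length ds - 1}"
  proof
    fix i assume i: "i \<in> {i. i < length L \<and> c \<le> L ! i}"
    have "L ! i < c" if "i \<le> length ds - 2"
      using sorted_nth_mono[of L i "length ds - 2"] that lenL n2 lt r1
      unfolding L_def c_def by fastforce
    thus "i \<in> {length ds - 1}" using i lenL by fastforce
  qed
  hence "card {i. i < length L \<and> c \<le> L ! i} \<le> 1"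
    using card_mono[of "{length ds - 1}"] by fastforce
  hence "length (filter (\<lambda>x. c \<le> x) L) \<le> 1" by (simp add: length_filter_conv_card)
  moreover have "card {i0, j} \<le> card {i. i < length ds \<and> c \<le> ds ! i}"
    by (intro card_mono) (use i0 j max in \<open>auto simp: c_def\<close>)
  hence "2 \<le> length (filter (\<lambda>x. c \<le> x) ds)" using ji by (simp add: length_filter_conv_card)
  moreover have "length (filter (\<lambda>x. c \<le> x) ds) = length (filter (\<lambda>x. c \<le> x) L)"
    unfolding L_def by (metis mset_filter mset_sort size_mset)
  ultimately show False by simp
qed

lemma diagonalization_quadratic_form:
  fixes A U D :: "real mat"
  assumes U: "U \<in> carrier_mat n n" and D: "D \<in> carrier_mat n n"
    and UU: "transpose_mat U * U = 1\<^sub>m n" and dD: "diagonal_mat D"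
    and AUD: "A = U * D * transpose_mat U" and y: "y \<in> carrier_vec n"
  shows "y \<bullet> (A *\<^sub>v y) = (\<Sum>i<n. D $$ (i, i) * (col U i \<bullet> y)\<^sup>2)"
    and "y \<bullet> y = (\<Sum>i<n. (col U i \<bullet> y)\<^sup>2)"
proof -
  define z where "z = transpose_mat U *\<^sub>v y"
  have UT: "transpose_mat U \<in> carrier_mat n n" using U by simp
  have UU': "U * transpose_mat U = 1\<^sub>m n" using mat_mult_left_right_inverse[OF UT U UU] .
  have z: "z \<in> carrier_vec n" unfolding z_def using U y by simp
  have zi: "z $ i = col U i \<bullet> y" if "i < n" for i unfolding z_def using U that by simp
  have Dz: "(D *\<^sub>v z) $ i = D $$ (i, i) * z $ i" if i: "i < n" for i
  proof -
    have "(D *\<^sub>v z) $ i = (\<Sum>j\<in>{0..<n}. D $$ (i, j) * z $ j)"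
      using D z i by (simp add: scalar_prod_def)
    also have "\<dots> = D $$ (i, i) * z $ i"
      by (rule sum.remove[THEN trans, of _ i])
        (use i dD D in \<open>auto simp: diagonal_mat_def intro!: sum.neutral\<close>)
    finally show ?thesis .
  qed
  have "A = U * (D * transpose_mat U)" using AUD U D UT by simp
  hence "A *\<^sub>v y = U *\<^sub>v ((D * transpose_mat U) *\<^sub>v y)"
    using assoc_mult_mat_vec[OF U mult_carrier_mat[OF D UT] y] by simp
  also have "(D * transpose_mat U) *\<^sub>v y = D *\<^sub>v z"
    unfolding z_def using assoc_mult_mat_vec[OF D UT y] .
  finally have "A *\<^sub>v y = U *\<^sub>v (D *\<^sub>v z)" .
  hence "y \<bullet> (A *\<^sub>v y) = z \<bullet> (D *\<^sub>v z)"
    using transpose_vec_mult_scalar[OF U, of "D *\<^sub>v z" y] D z y unfolding z_def by simp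
  also have "\<dots> = (\<Sum>i<n. D $$ (i, i) * (col U i \<bullet> y)\<^sup>2)"
    using z D Dz zi by (simp add: scalar_prod_def lessThan_atLeast0 power2_eq_square mult_ac)
  finally show "y \<bullet> (A *\<^sub>v y) = (\<Sum>i<n. D $$ (i, i) * (col U i \<bullet> y)\<^sup>2)" .
  have "y \<bullet> y = y \<bullet> ((U * transpose_mat U) *\<^sub>v y)" using UU' y by simp
  also have "\<dots> = z \<bullet> z"
    using transpose_vec_mult_scalar[OF U z y] U UT y unfolding z_def by simp
  also have "\<dots> = (\<Sum>i<n. (col U i \<bullet> y)\<^sup>2)"
    using z zi by (simp add: scalar_prod_def lessThan_atLeast0 power2_eq_square)
  finally show "y \<bullet> y = (\<Sum>i<n. (col U i \<bullet> y)\<^sup>2)" .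
qed

lemma second_eigenvalue_quadratic_form_bound:
  fixes A :: "real mat"
  assumes A: "A \<in> carrier_mat n n" and symA: "transpose_mat A = A" and n: "n \<ge> 2"
  shows "\<exists>p \<in> carrier_vec n. \<forall>y \<in> carrier_vec n. p \<bullet> y = 0 \<longrightarrow>
           y \<bullet> (A *\<^sub>v y) \<le> eigenvalues_desc A ! 1 * (y \<bullet> y)"
proof -
  obtain U D where U: "U \<in> carrier_mat n n" and D: "D \<in> carrier_mat n n"
    and UU: "transpose_mat U * U = 1\<^sub>m n" and dD: "diagonal_mat D"
    and AUD: "A = U * D * transpose_mat U"
    using real_symmetric_orthogonal_diagonalization[OF A symA] by blast
  define ds where "ds = diag_mat D"
  have lends: "length ds = n" unfolding ds_def diag_mat_def using D by simp
  have dsi: "ds ! i = D $$ (i, i)" if "i < n" for i unfolding ds_def diag_mat_def using D that by simp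
  have ev: "eigenvalues_desc A = rev (sort ds)"
    unfolding ds_def by (rule eigenvalues_desc_diagonalization[OF A U D UU dD AUD])
  obtain i0 where i0: "i0 < n" and i0max: "\<And>j. j < n \<Longrightarrow> ds ! j \<le> ds ! i0"
  proof -
    have "ds \<noteq> []" using lends n by auto
    hence "Max (set ds) \<in> set ds" by simp
    then obtain i where "i < n" "ds ! i = Max (set ds)" using lends by (metis in_set_conv_nth)
    thus thesis using that lends by (metis Max_ge finite_set nth_mem)
  qed
  \<comment> \<open>orthogonality to the top eigenvector leaves only the eigenvalues \<open>\<le> \<lambda>\<^sub>2\<close>\<close>
  have "y \<bullet> (A *\<^sub>v y) \<le> eigenvalues_desc A ! 1 * (y \<bullet> y)"
    if y: "y \<in> carrier_vec n" and py: "col U i0 \<bullet> y = 0" for y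
  proof -
    have "(\<Sum>i<n. D $$ (i, i) * (col U i \<bullet> y)\<^sup>2)
        \<le> (\<Sum>i<n. eigenvalues_desc A ! 1 * (col U i \<bullet> y)\<^sup>2)"
    proof (rule sum_mono)
      fix i assume "i \<in> {..<n}"
      hence "i = i0 \<or> D $$ (i, i) \<le> eigenvalues_desc A ! 1"
        using nth_le_second_largest[of i0 ds i] i0 i0max lends dsi unfolding ev by fastforce
      thus "D $$ (i, i) * (col U i \<bullet> y)\<^sup>2 \<le> eigenvalues_desc A ! 1 * (col U i \<bullet> y)\<^sup>2"
        using py by (auto intro: mult_right_mono)
    qed
    thus ?thesis
      unfolding diagonalization_quadratic_form[OF U D UU dD AUD y] by (simp add: sum_distrib_left)
  qed
  moreover have "col U i0 \<in> carrier_vec n" using U by (metis carrier_matD(1) carrier_vecI col_dim)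
  ultimately show ?thesis by blast
qed

section \<open>Cut bounds for symmetric weight matrices with constant row sums\<close>

definition bilinear_form :: "nat \<Rightarrow> (nat \<Rightarrow> nat \<Rightarrow> real) \<Rightarrow> (nat \<Rightarrow> real) \<Rightarrow> (nat \<Rightarrow> real) \<Rightarrow> real"
  where "bilinear_form n a f g = (\<Sum>i<n. \<Sum>j<n. f i * a i j * g j)"

lemma bilinear_form_linear_left:
  "bilinear_form n a (\<lambda>i. c * f i + d * g i) h = c * bilinear_form n a f h + d * bilinear_form n a g h"
proof -
  have "bilinear_form n a (\<lambda>i. c * f i + d * g i) h
      = (\<Sum>i<n. \<Sum>j<n. c * (f i * a i j * h j) + d * (g i * a i j * h j))"
    unfolding bilinear_form_def by (intro sum.cong refl) (simp add: algebra_simps)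
  thus ?thesis unfolding bilinear_form_def by (simp add: sum.distrib sum_distrib_left)
qed

lemma bilinear_form_linear_right:
  "bilinear_form n a h (\<lambda>i. c * f i + d * g i) = c * bilinear_form n a h f + d * bilinear_form n a h g"
proof -
  have "bilinear_form n a h (\<lambda>i. c * f i + d * g i)
      = (\<Sum>i<n. \<Sum>j<n. c * (h i * a i j * f j) + d * (h i * a i j * g j))"
    unfolding bilinear_form_def by (intro sum.cong refl) (simp add: algebra_simps)
  thus ?thesis unfolding bilinear_form_def by (simp add: sum.distrib sum_distrib_left)
qed

lemma bilinear_form_const_right:
  assumes rows: "\<And>i. i < n \<Longrightarrow> (\<Sum>j<n. a i j) = k"
  shows "bilinear_form n a f (\<lambda>_. 1) = k * (\<Sum>i<n. f i)"
proof -
  have "bilinear_form n a f (\<lambda>_. 1) = (\<Sum>i<n. f i * (\<Sum>j<n. a i j))"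
    unfolding bilinear_form_def by (simp add: sum_distrib_left)
  also have "\<dots> = (\<Sum>i<n. k * f i)" by (intro sum.cong refl) (simp add: rows)
  finally show ?thesis by (simp add: sum_distrib_left)
qed

lemma bilinear_form_symmetric:
  assumes sym: "\<And>i j. i < n \<Longrightarrow> j < n \<Longrightarrow> a j i = a i j"
  shows "bilinear_form n a f g = bilinear_form n a g f"
  unfolding bilinear_form_def
  by (subst sum.swap) (intro sum.cong refl, simp add: sym mult_ac)

lemma bilinear_form_le_on_mean_zero:
  fixes a :: "nat \<Rightarrow> nat \<Rightarrow> real" and p x :: "nat \<Rightarrow> real"
  assumes sym: "\<And>i j. i < n \<Longrightarrow> j < n \<Longrightarrow> a j i = a i j"
    and rows: "\<And>i. i < n \<Longrightarrow> (\<Sum>j<n. a i j) = k"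
    and ray: "\<And>f. (\<Sum>i<n. p i * f i) = 0 \<Longrightarrow> bilinear_form n a f f \<le> lam * (\<Sum>i<n. (f i)\<^sup>2)"
    and lam_k: "lam < k" and n: "n > 0" and mean_zero: "(\<Sum>i<n. x i) = 0"
  shows "bilinear_form n a x x \<le> lam * (\<Sum>i<n. (x i)\<^sup>2)"
proof -
  let ?B = "bilinear_form n a" and ?one = "\<lambda>_ :: nat. 1 :: real"
  have B11: "?B ?one ?one = k * n" using bilinear_form_const_right[OF rows] by simp
  have Bx1: "?B x ?one = 0" using bilinear_form_const_right[OF rows] mean_zero by simp
  have B1x: "?B ?one x = 0" using Bx1 bilinear_form_symmetric[OF sym, where f = "\<lambda>_. 1" and g = x] by simp
  define P where "P = (\<Sum>i<n. p i)"
  have "P \<noteq> 0"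
  proof
    assume "P = 0"
    hence "k * n \<le> lam * n" using ray[of ?one] B11 unfolding P_def by simp
    thus False using n lam_k by simp
  qed
  \<comment> \<open>as the constant vector has Rayleigh quotient \<open>k > lam\<close>, \<open>p\<close> is not orthogonal to it, so some
    combination \<open>y\<close> of it and \<open>x\<close> is; the cross terms vanish because \<open>x\<close> has mean zero\<close>
  define \<alpha> where "\<alpha> = (\<Sum>i<n. p i * x i)"
  define y where "y = (\<lambda>i. \<alpha> * ?one i + (- P) * x i)"
  have "(\<Sum>i<n. p i * y i) = (\<Sum>i<n. \<alpha> * p i - P * (p i * x i))"
    unfolding y_def by (intro sum.cong refl) (simp add: algebra_simps)
  also have "\<dots> = \<alpha> * P - P * \<alpha>"
    unfolding \<alpha>_def P_def by (simp add: sum_subtractf sum_distrib_left)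
  finally have "(\<Sum>i<n. p i * y i) = 0" by simp
  hence "?B y y \<le> lam * (\<Sum>i<n. (y i)\<^sup>2)" by (rule ray)
  moreover have "?B y y = \<alpha>\<^sup>2 * (k * n) + P\<^sup>2 * ?B x x"
    unfolding y_def bilinear_form_linear_left bilinear_form_linear_right Bx1 B1x B11
    by (simp add: power2_eq_square)
  moreover have "(\<Sum>i<n. (y i)\<^sup>2) = \<alpha>\<^sup>2 * n + P\<^sup>2 * (\<Sum>i<n. (x i)\<^sup>2)"
  proof -
    have "(\<Sum>i<n. (y i)\<^sup>2) = (\<Sum>i<n. \<alpha>\<^sup>2 - 2 * \<alpha> * P * x i + P\<^sup>2 * (x i)\<^sup>2)"
      unfolding y_def by (intro sum.cong refl) (simp add: power2_eq_square algebra_simps)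
    thus ?thesis using mean_zero
      by (simp add: sum.distrib sum_subtractf sum_distrib_left[symmetric])
  qed
  ultimately have "P\<^sup>2 * (?B x x - lam * (\<Sum>i<n. (x i)\<^sup>2)) \<le> \<alpha>\<^sup>2 * n * (lam - k)"
    by (simp add: algebra_simps)
  also have "\<dots> \<le> 0" using lam_k by (intro mult_nonneg_nonpos) auto
  finally show ?thesis using \<open>P \<noteq> 0\<close> by (simp add: mult_le_0_iff)
qed

lemma cut_form_spectral_bound:
  fixes a :: "nat \<Rightarrow> nat \<Rightarrow> real" and p w :: "nat \<Rightarrow> real"
  assumes sym: "\<And>i j. i < n \<Longrightarrow> j < n \<Longrightarrow> a j i = a i j"
    and rows: "\<And>i. i < n \<Longrightarrow> (\<Sum>j<n. a i j) = k"
    and ray: "\<And>f. (\<Sum>i<n. p i * f i) = 0 \<Longrightarrow> bilinear_form n a f f \<le> lam * (\<Sum>i<n. (f i)\<^sup>2)"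
    and lam_k: "lam < k" and n: "n > 0"
    and w01: "\<And>i. i < n \<Longrightarrow> w i = 0 \<or> w i = 1"
  shows "n * bilinear_form n a w (\<lambda>j. 1 - w j) \<ge> (k - lam) * (\<Sum>i<n. w i) * (n - (\<Sum>i<n. w i))"
proof -
  let ?B = "bilinear_form n a" and ?one = "\<lambda>_ :: nat. 1 :: real"
  define t where "t = (\<Sum>i<n. w i)"
  define C where "C = ?B w (\<lambda>j. 1 - w j)"
  \<comment> \<open>the centred indicator vector of the cut\<close>
  define x where "x = (\<lambda>i. real n * w i + (- t) * ?one i)"
  have B11: "?B ?one ?one = k * n" and Bw1: "?B w ?one = k * t"
    using bilinear_form_const_right[OF rows] unfolding t_def by simp_all
  have B1w: "?B ?one w = k * t" using Bw1 bilinear_form_symmetric[OF sym, where f = "\<lambda>_. 1" and g = w] by simp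
  have Bww: "?B w w = k * t - C"
  proof -
    have "?B w ?one = ?B w (\<lambda>j. 1 * w j + 1 * (1 - w j))" by simp
    thus ?thesis unfolding bilinear_form_linear_right Bw1 C_def by simp
  qed
  have "(\<Sum>i<n. x i) = 0" unfolding x_def t_def by (simp add: sum_subtractf sum_distrib_left[symmetric])
  hence "?B x x \<le> lam * (\<Sum>i<n. (x i)\<^sup>2)"
    using bilinear_form_le_on_mean_zero[OF sym rows ray lam_k n] by simp
  moreover have "?B x x = n\<^sup>2 * (k * t - C) - k * n * t\<^sup>2"
    unfolding x_def bilinear_form_linear_left bilinear_form_linear_right Bww Bw1 B1w B11
    by (simp add: power2_eq_square algebra_simps)
  moreover have "(\<Sum>i<n. (x i)\<^sup>2) = n * t * (n - t)"
  proof -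
    have "(\<Sum>i<n. (x i)\<^sup>2) = (\<Sum>i<n. ((real n)\<^sup>2 - 2 * n * t) * w i + t\<^sup>2)"
      unfolding x_def using w01 by (intro sum.cong refl) (auto simp: power2_eq_square algebra_simps)
    also have "\<dots> = ((real n)\<^sup>2 - 2 * n * t) * t + n * t\<^sup>2"
      by (simp add: sum.distrib sum_distrib_left[symmetric] t_def[symmetric])
    finally show ?thesis by (simp add: power2_eq_square algebra_simps)
  qed
  ultimately have "n\<^sup>2 * (k * t - C) - k * n * t\<^sup>2 \<le> lam * (n * t * (n - t))" by simp
  hence "n * (n * C - (k - lam) * t * (n - t)) \<ge> 0"
    by (simp add: power2_eq_square algebra_simps)
  thus ?thesis using n unfolding C_def t_def by (simp add: zero_le_mult_iff)
qed

lemma cut_form_degree_bound: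
  fixes a :: "nat \<Rightarrow> nat \<Rightarrow> real" and w :: "nat \<Rightarrow> real"
  assumes rows: "\<And>i. i < n \<Longrightarrow> (\<Sum>j<n. a i j) = k"
    and diag: "\<And>i. i < n \<Longrightarrow> a i i = 0"
    and a01: "\<And>i j. i < n \<Longrightarrow> j < n \<Longrightarrow> 0 \<le> a i j \<and> a i j \<le> 1"
    and w01: "\<And>i. i < n \<Longrightarrow> w i = 0 \<or> w i = 1"
  shows "bilinear_form n a w (\<lambda>j. 1 - w j) \<ge> (\<Sum>i<n. w i) * (k - (\<Sum>i<n. w i) + 1)"
proof -
  define t where "t = (\<Sum>i<n. w i)"
  have inner: "(\<Sum>j<n. a i j * w j) \<le> t - 1" if i: "i < n" and wi: "w i = 1" for i
  proof -
    have "(\<Sum>j<n. a i j * w j) \<le> (\<Sum>j<n. if j = i then 0 else w j)"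
    proof (rule sum_mono)
      fix j assume "j \<in> {..<n}"
      thus "a i j * w j \<le> (if j = i then 0 else w j)" using diag[OF i] a01[OF i, of j] w01[of j] by auto
    qed
    also have "\<dots> = t - w i"
    proof -
      have "t = (\<Sum>j<n. if j = i then 0 else w j) + (\<Sum>j<n. if j = i then w j else 0)"
        unfolding t_def by (subst sum.distrib[symmetric]) (rule sum.cong, auto)
      thus ?thesis using i by simp
    qed
    finally show ?thesis using wi by simp
  qed
  have row_cut: "(\<Sum>j<n. w i * a i j * (1 - w j)) \<ge> w i * (k - t + 1)" if i: "i < n" for i
  proof -
    have "(\<Sum>j<n. w i * a i j * (1 - w j)) = w i * ((\<Sum>j<n. a i j) - (\<Sum>j<n. a i j * w j))"
      by (simp add: sum_distrib_left sum_subtractf[symmetric] algebra_simps)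
    hence "(\<Sum>j<n. w i * a i j * (1 - w j)) = w i * (k - (\<Sum>j<n. a i j * w j))"
      using rows[OF i] by simp
    thus ?thesis using w01[OF i] inner[OF i] by auto
  qed
  have "t * (k - t + 1) = (\<Sum>i<n. w i * (k - t + 1))" unfolding t_def by (simp add: sum_distrib_right)
  also have "\<dots> \<le> bilinear_form n a w (\<lambda>j. 1 - w j)"
    unfolding bilinear_form_def by (rule sum_mono) (use row_cut in auto)
  finally show ?thesis unfolding t_def .
qed

lemma cut_form_complement:
  assumes sym: "\<And>i j. i < n \<Longrightarrow> j < n \<Longrightarrow> a j i = a i j"
  shows "bilinear_form n a (\<lambda>i. 1 - w i) (\<lambda>j. 1 - (1 - w j)) = bilinear_form n a w (\<lambda>j. 1 - w j)"
  using bilinear_form_symmetric[OF sym] by simp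

lemma cut_bounds_imp_ge_degree:
  fixes c s n k :: nat and lam :: real
  assumes s: "1 \<le> s" "s < n" and lam: "lam < k / 2"
    and spectral: "real n * c \<ge> (k - lam) * s * (real n - s)"
    and degree: "real c \<ge> s * (real k - s + 1)"
    and degree_compl: "real c \<ge> (real n - s) * (real k - (real n - s) + 1)"
  shows "k \<le> c"
proof -
  \<comment> \<open>\<open>m\<close> is the smaller and \<open>M\<close> the larger side of the cut\<close>
  obtain m M :: nat where m: "1 \<le> m" and mM: "real m * M = s * (real n - s)" and M: "n \<le> 2 * M"
    and degree_m: "real c \<ge> m * (real k - m + 1)"
  proof (cases "s \<le> n - s")
    case True thus thesis using that[of s "n - s"] s degree by (simp add: of_nat_diff)
  next
    case False thus thesis using that[of "n - s" s] s degree_compl by (simp add: of_nat_diff)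
  qed
  show ?thesis
  proof (cases "m \<le> k")
    case True
    have "real m * (real k - m + 1) - k = (real m - 1) * (real k - m)" by (simp add: algebra_simps)
    also have "\<dots> \<ge> 0" using True m by simp
    finally show ?thesis using degree_m by simp
  next
    case False
    have "0 < real m * M" using m M s by simp
    hence "(real k / 2) * (real m * M) < (k - lam) * (real m * M)"
      using lam by (intro mult_strict_right_mono) auto
    also have "\<dots> \<le> real n * c" using spectral mM by (simp add: mult.assoc)
    finally have "2 * real k * (real m * M) < 4 * (real n * c)" by (simp add: algebra_simps)
    moreover have "real k * m * n \<le> real k * m * (2 * M)" using M by (intro mult_left_mono) auto
    ultimately have "real n * (real k * m) < real n * (4 * c)" by (simp add: algebra_simps)
    hence "real k * m < 4 * real c" using s by (simp add: mult_less_cancel_left_pos)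
    moreover have "real k * (real k + 1) \<le> real k * m" using False by (intro mult_left_mono) auto
    moreover have "4 * (real k - 1) \<le> real k * (real k + 1)"
    proof -
      have "real k * (real k + 1) - 4 * (real k - 1) = (real k - 3/2)\<^sup>2 + 7/4"
        by (simp add: power2_eq_square algebra_simps)
      thus ?thesis using zero_le_power2[of "real k - 3/2"] by linarith
    qed
    ultimately have "4 * (real k - 1) < 4 * real c" by (meson order.trans order_le_less_trans)
    hence "real k < real (c + 1)" by simp
    thus ?thesis by linarith
  qed
qed

section \<open>Regular graphs\<close>

lemma card_cut_edges_eq_cut_form:
  assumes S: "S \<subseteq> {0..<n}"
  shows "real (card (cut_edges n E S))
    = bilinear_form n (\<lambda>i j. of_bool (E i j)) (\<lambda>i. of_bool (i \<in> S)) (\<lambda>j. 1 - of_bool (j \<in> S))"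
proof -
  have fin: "finite S" using S finite_subset by blast
  have "cut_edges n E S = Sigma S (\<lambda>i. {..<n} \<inter> {j. j \<notin> S \<and> E i j})"
    unfolding cut_edges_def by auto
  hence "real (card (cut_edges n E S)) = (\<Sum>i\<in>S. \<Sum>j<n. of_bool (j \<notin> S \<and> E i j))"
    using fin by (simp add: card_SigmaI)
  also have "\<dots> = (\<Sum>i<n. of_bool (i \<in> S) * (\<Sum>j<n. of_bool (j \<notin> S \<and> E i j)))"
  proof -
    have "{..<n} \<inter> {i. i \<in> S} = S" using S by auto
    thus ?thesis by (simp only: sum_of_bool_mult_eq[OF finite_lessThan])
  qed
  also have "\<dots> = (\<Sum>i<n. \<Sum>j<n. of_bool (i \<in> S) * of_bool (j \<notin> S \<and> E i j))"
    by (simp only: sum_distrib_left)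
  also have "\<dots>
      = bilinear_form n (\<lambda>i j. of_bool (E i j)) (\<lambda>i. of_bool (i \<in> S)) (\<lambda>j. 1 - of_bool (j \<in> S))"
    unfolding bilinear_form_def by (intro sum.cong refl) auto
  finally show ?thesis .
qed

lemma adj_matrix_quadratic_form:
  "vec n f \<bullet> (adj_matrix n E *\<^sub>v vec n f) = bilinear_form n (\<lambda>i j. of_bool (E i j)) f f"
  unfolding adj_matrix_def bilinear_form_def
  by (simp add: scalar_prod_def lessThan_atLeast0 sum_distrib_left mult_ac of_bool_def)

lemma simple_graph_lambda2_form_bound:
  assumes G: "simple_graph n E" and n: "n \<ge> 2"
  obtains p :: "nat \<Rightarrow> real" where "\<And>f. (\<Sum>i<n. p i * f i) = 0 \<Longrightarrow>
    bilinear_form n (\<lambda>i j. of_bool (E i j)) f f \<le> lambda2 n E * (\<Sum>i<n. (f i)\<^sup>2)"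
proof -
  have A: "adj_matrix n E \<in> carrier_mat n n" unfolding adj_matrix_def by simp
  have "transpose_mat (adj_matrix n E) = adj_matrix n E"
    using G unfolding adj_matrix_def simple_graph_def by (intro eq_matI) auto
  then obtain p where p: "p \<in> carrier_vec n"
    and bound: "\<And>y. y \<in> carrier_vec n \<Longrightarrow> p \<bullet> y = 0 \<Longrightarrow>
      y \<bullet> (adj_matrix n E *\<^sub>v y) \<le> lambda2 n E * (y \<bullet> y)"
    using second_eigenvalue_quadratic_form_bound[OF A _ n] unfolding lambda2_def by blast
  show thesis
  proof (rule that[of "\<lambda>i. p $ i"])
    fix f :: "nat \<Rightarrow> real" assume "(\<Sum>i<n. p $ i * f i) = 0"
    hence "p \<bullet> vec n f = 0" using p by (simp add: scalar_prod_def lessThan_atLeast0)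
    from bound[OF _ this]
    show "bilinear_form n (\<lambda>i j. of_bool (E i j)) f f \<le> lambda2 n E * (\<Sum>i<n. (f i)\<^sup>2)"
      unfolding adj_matrix_quadratic_form by (simp add: scalar_prod_def lessThan_atLeast0 power2_eq_square)
  qed
qed

lemma regular_graph_row_sum:
  assumes "regular_graph n E k" and "i < n"
  shows "(\<Sum>j<n. of_bool (E i j)) = real k"
proof -
  have "{..<n} \<inter> {j. E i j} = {j. j < n \<and> E i j}" by auto
  thus ?thesis using assms unfolding regular_graph_def by simp
qed

lemma regular_graph_cut_ge_degree:
  assumes G: "regular_graph n E k" and lam: "lambda2 n E < k / 2"
    and S: "S \<noteq> {}" "S \<subset> {0..<n}"
  shows "k \<le> card (cut_edges n E S)"
proof -
  let ?a = "\<lambda>i j. of_bool (E i j) :: real" and ?w = "\<lambda>i. of_bool (i \<in> S) :: real"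
  have simple: "simple_graph n E" using G unfolding regular_graph_def by simp
  have sym: "\<And>i j. i < n \<Longrightarrow> j < n \<Longrightarrow> ?a j i = ?a i j"
    and diag: "\<And>i. i < n \<Longrightarrow> ?a i i = 0"
    using simple unfolding simple_graph_def by auto
  note rows = regular_graph_row_sum[OF G]
  have a01: "\<And>i j. i < n \<Longrightarrow> j < n \<Longrightarrow> 0 \<le> ?a i j \<and> ?a i j \<le> 1"
    and w01: "\<And>i. i < n \<Longrightarrow> ?w i = 0 \<or> ?w i = 1"
    and w01': "\<And>i. i < n \<Longrightarrow> 1 - ?w i = 0 \<or> 1 - ?w i = 1" by auto
  define s where "s = card S"
  have "finite S" using S finite_subset by auto
  hence s1: "1 \<le> s" using S unfolding s_def by (simp add: Suc_le_eq card_gt_0_iff)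
  have sn: "s < n" using psubset_card_mono[OF _ S(2)] unfolding s_def by simp
  have "{..<n} \<inter> {i. i \<in> S} = S" using S by auto
  hence sum_w: "(\<Sum>i<n. ?w i) = s" unfolding s_def by simp
  have "n \<ge> 2" using s1 sn by linarith
  then obtain p where ray: "\<And>f. (\<Sum>i<n. p i * f i) = 0 \<Longrightarrow>
      bilinear_form n ?a f f \<le> lambda2 n E * (\<Sum>i<n. (f i)\<^sup>2)"
    using simple_graph_lambda2_form_bound[OF simple] by blast
  have cut: "bilinear_form n ?a ?w (\<lambda>j. 1 - ?w j) = card (cut_edges n E S)"
    using card_cut_edges_eq_cut_form[of S n E] S by simp
  have spectral: "real n * card (cut_edges n E S) \<ge> (k - lambda2 n E) * s * (real n - s)"
    using cut_form_spectral_bound[where w = ?w, OF sym rows ray _ _ w01] lam sn sum_w cut by simp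
  have degree: "real (card (cut_edges n E S)) \<ge> s * (real k - s + 1)"
    using cut_form_degree_bound[where w = ?w, OF rows diag a01 w01] sum_w cut by simp
  have degree_compl: "real (card (cut_edges n E S)) \<ge> (real n - s) * (real k - (real n - s) + 1)"
    using cut_form_degree_bound[where w = "\<lambda>i. 1 - ?w i", OF rows diag a01 w01'] sum_w
      cut_form_complement[OF sym] cut by (simp add: sum_subtractf)
  show ?thesis by (rule cut_bounds_imp_ge_degree[OF s1 sn lam spectral degree degree_compl])
qed

theorem lemma3p5:
  "\<exists>N :: real \<Rightarrow> nat. \<forall>n E k.
     regular_graph n E k \<and> lambda2_norm n E k < 1/2 \<and> n \<ge> N (lambda2_norm n E k) \<longrightarrow>
     (\<forall>S. S \<noteq> {} \<and> S \<subset> {0..<n} \<longrightarrow> card (cut_edges n E S) \<ge> k)"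
proof (intro exI[of _ "\<lambda>_. 0"] allI impI)
  fix n E k S
  assume G: "regular_graph n E k \<and> lambda2_norm n E k < 1/2 \<and> 0 \<le> n"
    and S: "S \<noteq> {} \<and> S \<subset> {0..<n}"
  show "k \<le> card (cut_edges n E S)"
  proof (cases "k = 0")
    case False
    hence "lambda2 n E < k / 2" using G unfolding lambda2_norm_def by (simp add: field_simps)
    thus ?thesis using regular_graph_cut_ge_degree G S by blast
  qed simp
qed

end
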